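(* Let $K$ be a field, $A=\{\alpha_1,\dots,\alpha_m\}\subset K$, $B=\{\beta_1,\dots,\beta_n\}\subset K$ finite sets with $|A|=m$, $|B|=n$, $f=\prod_{i}(x-\alpha_i)$, $g=\prod_j(x-\beta_j)$, and let $x$ be an indeterminate. Let $0\le k\le\min\{m-1,n-1\}$. Let $M_F$ be the $(m+1)\times(m+1)$ matrix whose columns are indexed by $c\in(\alpha_1,\dots,\alpha_m,x)$ (in this order), and whose column indexed by $c$ is $$\big(g(c)c^{m-k-1},\,g(c)c^{m-k-2},\dots,g(c),\,c^{k},\,c^{k-1},\dots,c,\,1\big)^T;$$ similarly let $M_G$ be the $(n+1)\times(n+1)$ matrix with columns indexed by $c\in(\beta_1,\dots,\beta_n,x)$, the column indexed by $c$ being $\big(f(c)c^{n-k-1},\dots,f(c),\,c^{k},\dots,1\big)^T$. Then $$F_k(f,g)=(-1)^{m-k}\frac{\det M_F}{\det V(\alpha_1,\dots,\alpha_m,x)},\qquad G_k(f,g)=(-1)^{(m-k-1)(n-k)}\frac{\det M_G}{\det V(\beta_1,\dots,\beta_n,x)}.$$ In particular $F_k(f,g)$ and $G_k(f,g)$ are symmetric polynomials in $A\cup\{x\}$ and $B\cup\{x\}$ respectively.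
   Context: For $c=(c_1,\dots,c_\ell)$, $V(c)$ is the $\ell\times\ell$ Vandermonde matrix whose $i$-th column is $(c_i^{\ell-1},\dots,c_i,1)^T$, so $\det V(c)=\prod_{1\le i<j\le \ell}(c_i-c_j)$. Write $f=\sum_{i=0}^m f_ix^i$, $g=\sum_{i=0}^ng_ix^i$ with $f_i=g_i=0$ outside the natural ranges. For $0\le k\le\min\{m-1,n-1\}$ consider the $(m+n-2k)\times(m+n-2k)$ matrices with rows indexed by $(f,j)$, $j=n-k-1,\dots,0$, followed by $(g,j)$, $j=m-k-1,\dots,0$, whose first $m+n-2k-1$ entries in row $(f,j)$ (resp. $(g,j)$) are the coefficients of $x^{m+n-k-1},\dots,x^{k+1}$ in $x^jf$ (resp. $x^jg$). $F_k(f,g)(x)$ is the determinant of such a matrix with last entry $x^j$ in rows $(f,j)$ and $0$ in rows $(g,j)$; $G_k(f,g)(x)$ is the determinant with last entry $0$ in rows $(f,j)$ and $x^j$ in rows $(g,j)$. *)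

theory Defs
  imports "Jordan_Normal_Form.Determinant" "HOL-Computational_Algebra.Polynomial"
          "HOL-Computational_Algebra.Fraction_Field"
begin

text \<open>Rows are indexed by (f,j), j = n-k-1,...,0,
  followed by (g,j), j = m-k-1,...,0; the first m+n-2k-1 columns hold the coefficients of
  x^(m+n-k-1),...,x^(k+1) in x^j f (resp. x^j g), embedded as constant polynomials;
  the last column holds x^j in f-rows if lastF and in g-rows if lastG (0 otherwise).
  m, n are the formal degrees of f, g.\<close>
definition subres_mat :: "bool \<Rightarrow> bool \<Rightarrow> nat \<Rightarrow> nat \<Rightarrow> nat \<Rightarrow> 'a::comm_ring_1 poly \<Rightarrow> 'a poly \<Rightarrow> 'a poly mat" where
  "subres_mat lastF lastG m n k f g =
     (let N = m + n - 2 * k in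
      mat N N (\<lambda>(r, c).
        let isF = r < n - k;
            j = (if isF then n - k - 1 - r else m - k - 1 - (r - (n - k)));
            p = (if isF then f else g)
        in if c < N - 1 then [: coeff (monom 1 j * p) (m + n - k - 1 - c) :]
           else (if (isF \<and> lastF) \<or> (\<not> isF \<and> lastG) then monom 1 j else 0)))"

definition F_k :: "nat \<Rightarrow> nat \<Rightarrow> nat \<Rightarrow> 'a::comm_ring_1 poly \<Rightarrow> 'a poly \<Rightarrow> 'a poly" where
  "F_k m n k f g = det (subres_mat True False m n k f g)"

definition G_k :: "nat \<Rightarrow> nat \<Rightarrow> nat \<Rightarrow> 'a::comm_ring_1 poly \<Rightarrow> 'a poly \<Rightarrow> 'a poly" where
  "G_k m n k f g = det (subres_mat False True m n k f g)"

definition vandermonde :: "'a::comm_ring_1 list \<Rightarrow> 'a mat" where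
  "vandermonde cs = mat (length cs) (length cs) (\<lambda>(r, i). (cs ! i) ^ (length cs - 1 - r))"

definition M_mat :: "'a::comm_ring_1 poly \<Rightarrow> nat \<Rightarrow> 'a poly list \<Rightarrow> 'a poly mat" where
  "M_mat h k cs =
     (let l = length cs in
      mat l l (\<lambda>(r, i). let c = cs ! i in
        if r < l - 1 - k then pcompose h c * c ^ (l - 1 - k - 1 - r) else c ^ (l - 1 - r)))"

end

theory Submission
  imports Defs
begin

text \<open>
  Move the last column of the subresultant matrix S to position n-k-1 and add k+1 unit rows:
  the rows of the resulting square matrix are the coefficient vectors, in every degree below m+n-k,
  of the polynomials x^j f and x^j g and of x^k, ..., 1, except that the slot of degree m is
  preceded by the extra column of S.  Multiply on the right by the matrix whose columns are
  (c^(m+n-k-1), ..., c^(m+1), -f(c), c^m, ..., 1) for the m roots c of f and for c = x,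
  bordered by n-k unit columns: an entry of the product is the polynomial of the row evaluated at c,
  corrected by -x^j f(c) in the f-rows.  That correction kills the f-rows, since c is a root of f
  or c = x, so the product is block triangular with the unitriangular f-part and M_F on the
  diagonal, while the second factor has determinant det V.  The formula for G_k follows from the
  one for F_k with the roles of f and g exchanged, by swapping the two blocks of rows.
\<close>

lemma pcompose_monom_mult:
  fixes p c :: "'a::comm_ring_1 poly"
  shows "pcompose (monom 1 j * p) c = c ^ j * pcompose p c"
proof -
  have "pcompose ([:0, 1:] ^ j) c = c ^ j"
    by (induction j) (simp_all add: pcompose_mult pcompose_pCons pcompose_1)
  then show ?thesis by (simp add: pcompose_mult monom_altdef)
qed

lemma pcompose_eq_sum_coeff:
  fixes p c :: "'a::comm_ring_1 poly"
  assumes "degree p < D"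
  shows "pcompose p c = (\<Sum>d<D. [:coeff p d:] * c ^ d)"
proof -
  have "pcompose p c = (\<Sum>d\<le>degree p. [:coeff p d:] * c ^ d)"
    by (simp add: pcompose_altdef poly_altdef coeff_map_poly degree_map_poly)
  also have "\<dots> = (\<Sum>d<D. [:coeff p d:] * c ^ d)"
    by (rule sum.mono_neutral_left) (use assms in \<open>auto simp: coeff_eq_0\<close>)
  finally show ?thesis .
qed

lemma lead_coeff_prod_linear: "lead_coeff (\<Prod>a\<leftarrow>as. [:- a, 1:] :: 'a::idom poly) = 1"
proof (induction as)
  case (Cons a as)
  have "lead_coeff ([:- a, 1:] * (\<Prod>a\<leftarrow>as. [:- a, 1:])) = lead_coeff [:- a, 1:] * 1"
    by (simp only: lead_coeff_mult Cons.IH)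
  then show ?case by simp
qed simp

lemma degree_prod_linear: "degree (\<Prod>a\<leftarrow>as. [:- a, 1:] :: 'a::idom poly) = length as"
proof (induction as)
  case (Cons a as)
  have "(\<Prod>a\<leftarrow>as. [:- a, 1:] :: 'a poly) \<noteq> 0"
    using lead_coeff_prod_linear[of as] by auto
  then have "degree ([:- a, 1:] * (\<Prod>a\<leftarrow>as. [:- a, 1:])) = 1 + length as"
    using Cons.IH by (subst degree_mult_eq) simp_all
  then show ?case by simp
qed simp

lemma poly_prod_linear_eq_0: "a \<in> set as \<Longrightarrow> poly (\<Prod>a\<leftarrow>as. [:- a, 1:] :: 'a::idom poly) a = 0"
  by (induction as) auto

lemma det_vandermonde_nonzero:
  fixes cs :: "'a::idom list"
  assumes "distinct cs" and "cs \<noteq> []"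
  shows "det (vandermonde cs) \<noteq> 0"
proof
  define l where "l = length cs"
  have V: "vandermonde cs \<in> carrier_mat l l" unfolding vandermonde_def l_def by simp
  assume "det (vandermonde cs) = 0"
  then have "det (transpose_mat (vandermonde cs)) = 0" by (simp add: det_transpose[OF V])
  then obtain w where w: "w \<in> carrier_vec l" "w \<noteq> 0\<^sub>v l" "transpose_mat (vandermonde cs) *\<^sub>v w = 0\<^sub>v l"
    using det_0_iff_vec_prod_zero[of "transpose_mat (vandermonde cs)" l] V by auto
  \<comment> \<open>the kernel vector is the coefficient vector of a nonzero polynomial of degree < l vanishing on cs\<close>
  define Q where "Q = (\<Sum>r<l. monom (w $ r) (l - 1 - r))"
  have root: "poly Q c = 0" if "c \<in> set cs" for c
  proof -
    obtain i where i: "i < l" "c = cs ! i" using \<open>c \<in> set cs\<close> by (auto simp: in_set_conv_nth l_def)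
    have "(transpose_mat (vandermonde cs) *\<^sub>v w) $ i = 0" using w(3) i by simp
    then show ?thesis using i V w(1)
      by (simp add: Q_def poly_sum poly_monom scalar_prod_def vandermonde_def l_def
          atLeast0LessThan mult.commute)
  qed
  obtain r0 where r0: "r0 < l" "w $ r0 \<noteq> 0" using w(1,2) by (auto simp: vec_eq_iff)
  have "coeff Q (l - 1 - r0) = (\<Sum>r<l. if r = r0 then w $ r else 0)"
    unfolding Q_def coeff_sum coeff_monom by (rule sum.cong) (use r0 in auto)
  also have "\<dots> = w $ r0" using r0 by simp
  finally have "Q \<noteq> 0" using r0 by auto
  have "degree Q \<le> l - 1"
    by (rule degree_le) (auto simp: Q_def coeff_sum intro!: sum.neutral)
  have "l = card (set cs)" using distinct_card[OF \<open>distinct cs\<close>] by (simp add: l_def)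
  also have "\<dots> \<le> card {x. poly Q x = 0}"
    using root poly_roots_finite[OF \<open>Q \<noteq> 0\<close>] by (intro card_mono) auto
  also have "\<dots> \<le> degree Q" by (rule card_poly_roots_bound[OF \<open>Q \<noteq> 0\<close>])
  finally show False using \<open>degree Q \<le> l - 1\<close> \<open>cs \<noteq> []\<close> unfolding l_def by (cases cs) auto
qed

lemma det_upper_right_zero_blocks:
  fixes A :: "'a::idom mat"
  assumes A: "A \<in> carrier_mat (a + b) (a + b)"
    and zero: "\<And>i j. i < a \<Longrightarrow> a \<le> j \<Longrightarrow> j < a + b \<Longrightarrow> A $$ (i, j) = 0"
  shows "det A = det (mat a a (\<lambda>(i, j). A $$ (i, j))) * det (mat b b (\<lambda>(i, j). A $$ (i + a, j + a)))"
proof -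
  have "A = four_block_mat (mat a a (\<lambda>(i, j). A $$ (i, j))) (0\<^sub>m a b)
      (mat b a (\<lambda>(i, j). A $$ (i + a, j))) (mat b b (\<lambda>(i, j). A $$ (i + a, j + a)))"
    by (rule eq_matI) (use A zero in auto)
  then show ?thesis by (metis det_four_block_mat_upper_right_zero mat_carrier)
qed

lemma det_lower_left_zero_blocks:
  fixes A :: "'a::idom mat"
  assumes A: "A \<in> carrier_mat (a + b) (a + b)"
    and zero: "\<And>i j. a \<le> i \<Longrightarrow> i < a + b \<Longrightarrow> j < a \<Longrightarrow> A $$ (i, j) = 0"
  shows "det A = det (mat a a (\<lambda>(i, j). A $$ (i, j))) * det (mat b b (\<lambda>(i, j). A $$ (i + a, j + a)))"
proof -
  have "A = four_block_mat (mat a a (\<lambda>(i, j). A $$ (i, j))) (mat a b (\<lambda>(i, j). A $$ (i, j + a)))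
      (0\<^sub>m b a) (mat b b (\<lambda>(i, j). A $$ (i + a, j + a)))"
    by (rule eq_matI) (use A zero in auto)
  then show ?thesis by (metis det_four_block_mat_lower_left_zero mat_carrier)
qed

lemma to_fract_eq_signed_quotient:
  fixes a b c :: "'a::idom"
  assumes "a * b = (- 1) ^ e * c" and "b \<noteq> 0"
  shows "to_fract a = (- 1) ^ e * to_fract c / to_fract b"
proof -
  have "to_fract a * to_fract b = (- 1) ^ e * to_fract c"
    using arg_cong[OF assms(1), of to_fract] by (cases "even e") simp_all
  then show ?thesis using assms(2) by (simp add: field_simps)
qed

lemma subres_mat_index:
  assumes "i < m + n - 2 * k" "c < m + n - 2 * k"
  shows "subres_mat lastF lastG m n k f g $$ (i, c) =
    (let j = (if i < n - k then n - k - 1 - i else m - k - 1 - (i - (n - k))) in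
     if c < m + n - 2 * k - 1 then [:coeff (monom 1 j * (if i < n - k then f else g)) (m + n - k - 1 - c):]
     else if (i < n - k \<and> lastF) \<or> (\<not> i < n - k \<and> lastG) then monom 1 j else 0)"
  using assms by (simp add: subres_mat_def Let_def)

lemma G_k_eq_F_k_swap:
  assumes "k < m" and "k < n"
  shows "G_k m n k f g = (- 1) ^ ((m - k) * (n - k)) * F_k n m k g f"
proof -
  let ?S = "subres_mat False True m n k f g"
  have "(m - k) + (n - k) = m + n - 2 * k" using assms by simp
  then have S: "?S \<in> carrier_mat ((m - k) + (n - k)) ((m - k) + (n - k))"
    by (simp add: subres_mat_def Let_def)
  have "mat ((m - k) + (n - k)) ((m - k) + (n - k))
      (\<lambda>(i, j). ?S $$ (if i < m - k then i + (n - k) else i - (m - k), j))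
      = subres_mat True False n m k g f"
  proof (rule eq_matI)
    fix i j assume "i < dim_row (subres_mat True False n m k g f)"
      "j < dim_col (subres_mat True False n m k g f)"
    then have ij: "i < (m - k) + (n - k)" "j < (m - k) + (n - k)"
      using assms by (auto simp: subres_mat_def Let_def)
    show "mat ((m - k) + (n - k)) ((m - k) + (n - k))
        (\<lambda>(i, j). ?S $$ (if i < m - k then i + (n - k) else i - (m - k), j)) $$ (i, j)
        = subres_mat True False n m k g f $$ (i, j)"
      using ij assms by (cases "i < m - k") (simp_all add: subres_mat_index add.commute Let_def)
  qed (use assms in \<open>auto simp: subres_mat_def Let_def\<close>)
  then show ?thesis
    unfolding G_k_def F_k_def using det_swap_rows[OF S] by simp
qed

locale subres_evaluation =
  fixes m n k :: nat and f g :: "'a::idom poly" and cs :: "'a poly list"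
  assumes k_less_m: "k < m" and k_less_n: "k < n"
    and degree_f: "degree f = m" and monic_f: "lead_coeff f = 1"
    and degree_g: "degree g \<le> n"
    and length_cs: "length cs = Suc m"
    and root_or_var: "\<And>c. c \<in> set cs \<Longrightarrow> pcompose f c = 0 \<or> c = [:0, 1:]"
begin

definition row_shift :: "nat \<Rightarrow> nat" where
  "row_shift i = (if i < n - k then n - k - 1 - i else m - k - 1 - (i - (n - k)))"

definition row_poly :: "nat \<Rightarrow> 'a poly" where
  "row_poly i = monom 1 (row_shift i) * (if i < n - k then f else g)"

definition row_last :: "nat \<Rightarrow> 'a poly" where
  "row_last i = (if i < n - k then monom 1 (row_shift i) else 0)"

lemma subres_mat_entry:
  assumes "i < m + n - 2 * k" "c < m + n - 2 * k"
  shows "subres_mat True False m n k f g $$ (i, c) =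
    (if c < m + n - 2 * k - 1 then [:coeff (row_poly i) (m + n - k - 1 - c):] else row_last i)"
  using assms by (simp add: subres_mat_index row_poly_def row_last_def row_shift_def Let_def)

lemma degree_row_poly:
  assumes "i < m + n - 2 * k"
  shows "degree (row_poly i) < m + n - k"
proof -
  have "degree (row_poly i) \<le> row_shift i + degree (if i < n - k then f else g)"
    unfolding row_poly_def
    using degree_mult_le[of "monom 1 (row_shift i)"] degree_monom_le[of 1 "row_shift i"]
    by (meson add_right_mono order_trans)
  then show ?thesis
    using assms k_less_m k_less_n degree_f degree_g by (auto simp: row_shift_def split: if_splits)
qed

text \<open>
  Column r \<noteq> n-k-1 of ext_mat holds the coefficient of x^(col_degree r), so every degree below
  m+n-k occurs exactly once; column n-k-1 holds the last column of the subresultant matrix and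
  is paired with the row -f(c) of eval_mat.
\<close>

definition col_degree :: "nat \<Rightarrow> nat" where
  "col_degree r = (if r < n - k - 1 then m + n - k - 1 - r else m + n - k - r)"

lemma sum_col_degree:
  "(\<Sum>r \<in> {..<m + n - k + 1} - {n - k - 1}. h (col_degree r)) = (\<Sum>d<m + n - k. h d)"
  by (rule sum.reindex_bij_witness[of _ "\<lambda>d. if m < d then m + n - k - 1 - d else m + n - k - d" col_degree])
    (use k_less_m k_less_n in \<open>auto simp: col_degree_def\<close>)

definition ext_mat :: "'a poly mat" where
  "ext_mat = mat (m + n - k + 1) (m + n - k + 1) (\<lambda>(i, r).
     if i < m + n - 2 * k then
       if r = n - k - 1 then row_last i else [:coeff (row_poly i) (col_degree r):]
     else if i = r then 1 else 0)"

definition eval_mat :: "'a poly mat" where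
  "eval_mat = mat (m + n - k + 1) (m + n - k + 1) (\<lambda>(r, j).
     if j < n - k then if r = j then 1 else 0
     else if r = n - k - 1 then - pcompose f (cs ! (j - (n - k)))
     else cs ! (j - (n - k)) ^ col_degree r)"

lemma det_ext_mat: "det ext_mat = (- 1) ^ (m - k) * F_k m n k f g"
proof -
  let ?N = "m + n - 2 * k"
  let ?S = "subres_mat True False m n k f g"
  let ?U = "mat ?N ?N (\<lambda>(i, j). ext_mat $$ (i, j))"
  have S: "?S \<in> carrier_mat ?N ?N" by (simp add: subres_mat_def Let_def)
  have N: "?N = (n - k - 1) + (m - k) + 1" using k_less_m k_less_n by simp
  have "mat ?N ?N (\<lambda>(i, j). ?S $$ (i, if j < n - k - 1 then j
      else if j < n - k - 1 + 1 then j + (m - k) else j - 1)) = ?U"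
    by (rule eq_matI) (use k_less_m k_less_n in \<open>auto simp: ext_mat_def subres_mat_entry col_degree_def\<close>)
  then have "det ?S = (- 1) ^ (m - k) * det ?U"
    using det_swap_final_cols[OF S N] by simp
  moreover have "det ext_mat = det ?U * det (mat (k + 1) (k + 1) (\<lambda>(i, j). ext_mat $$ (i + ?N, j + ?N)))"
    by (rule det_lower_left_zero_blocks) (use k_less_m k_less_n in \<open>auto simp: ext_mat_def\<close>)
  moreover have "mat (k + 1) (k + 1) (\<lambda>(i, j). ext_mat $$ (i + ?N, j + ?N)) = 1\<^sub>m (k + 1)"
    by (rule eq_matI) (use k_less_m k_less_n in \<open>auto simp: ext_mat_def\<close>)
  ultimately show ?thesis
    unfolding F_k_def by (simp add: mult.assoc[symmetric] power_mult_distrib[symmetric])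
qed

lemma det_eval_mat: "det eval_mat = det (vandermonde cs)"
proof -
  have "det eval_mat = det (mat (n - k) (n - k) (\<lambda>(i, j). eval_mat $$ (i, j)))
      * det (mat (Suc m) (Suc m) (\<lambda>(i, j). eval_mat $$ (i + (n - k), j + (n - k))))"
    by (rule det_lower_left_zero_blocks) (use k_less_m k_less_n in \<open>auto simp: eval_mat_def\<close>)
  moreover have "mat (n - k) (n - k) (\<lambda>(i, j). eval_mat $$ (i, j)) = 1\<^sub>m (n - k)"
    by (rule eq_matI) (use k_less_m k_less_n in \<open>auto simp: eval_mat_def\<close>)
  moreover have "mat (Suc m) (Suc m) (\<lambda>(i, j). eval_mat $$ (i + (n - k), j + (n - k))) = vandermonde cs"
    by (rule eq_matI)
      (use k_less_m k_less_n in \<open>auto simp: eval_mat_def vandermonde_def length_cs col_degree_def\<close>)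
  ultimately show ?thesis by simp
qed

lemma ext_mat_mult_eval_mat_index:
  assumes "i < m + n - k + 1" "j < m + n - k + 1"
  shows "(ext_mat * eval_mat) $$ (i, j) = (\<Sum>r<m + n - k + 1. ext_mat $$ (i, r) * eval_mat $$ (r, j))"
  using assms by (simp add: ext_mat_def eval_mat_def scalar_prod_def lessThan_atLeast0)

lemma ext_mat_mult_eval_mat_left:
  assumes "i < m + n - k + 1" "j < n - k"
  shows "(ext_mat * eval_mat) $$ (i, j) = ext_mat $$ (i, j)"
proof -
  have "(ext_mat * eval_mat) $$ (i, j) = (\<Sum>r<m + n - k + 1. ext_mat $$ (i, r) * eval_mat $$ (r, j))"
    by (rule ext_mat_mult_eval_mat_index) (use assms in auto)
  also have "\<dots> = (\<Sum>r<m + n - k + 1. if r = j then ext_mat $$ (i, r) else 0)"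
    using assms by (intro sum.cong) (auto simp: eval_mat_def)
  finally show ?thesis using assms by simp
qed

lemma ext_mat_mult_eval_mat_bottom:
  assumes "m + n - 2 * k \<le> i" "i < m + n - k + 1" "j < m + n - k + 1"
  shows "(ext_mat * eval_mat) $$ (i, j) = eval_mat $$ (i, j)"
proof -
  have "(ext_mat * eval_mat) $$ (i, j) = (\<Sum>r<m + n - k + 1. ext_mat $$ (i, r) * eval_mat $$ (r, j))"
    by (rule ext_mat_mult_eval_mat_index) (use assms in auto)
  also have "\<dots> = (\<Sum>r<m + n - k + 1. if r = i then eval_mat $$ (r, j) else 0)"
    using assms by (intro sum.cong) (auto simp: ext_mat_def)
  finally show ?thesis using assms by simp
qed

lemma ext_mat_mult_eval_mat_right:
  assumes "i < m + n - 2 * k" "t < Suc m"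
  shows "(ext_mat * eval_mat) $$ (i, n - k + t)
    = pcompose (row_poly i) (cs ! t) - row_last i * pcompose f (cs ! t)"
proof -
  let ?P = "m + n - k + 1" and ?c = "cs ! t"
  have lt: "n - k + t < ?P" "n - k - 1 \<in> {..<?P}" using assms k_less_n by auto
  have "(ext_mat * eval_mat) $$ (i, n - k + t)
      = (\<Sum>r<?P. ext_mat $$ (i, r) * eval_mat $$ (r, n - k + t))"
    by (rule ext_mat_mult_eval_mat_index) (use assms lt in auto)
  also have "\<dots> = ext_mat $$ (i, n - k - 1) * eval_mat $$ (n - k - 1, n - k + t)
        + (\<Sum>r \<in> {..<?P} - {n - k - 1}. ext_mat $$ (i, r) * eval_mat $$ (r, n - k + t))"
    by (rule sum.remove) (use lt in auto)
  also have "(\<Sum>r \<in> {..<?P} - {n - k - 1}. ext_mat $$ (i, r) * eval_mat $$ (r, n - k + t))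
      = (\<Sum>r \<in> {..<?P} - {n - k - 1}. [:coeff (row_poly i) (col_degree r):] * ?c ^ col_degree r)"
    using assms k_less_n by (intro sum.cong) (auto simp: ext_mat_def eval_mat_def)
  also have "\<dots> = (\<Sum>d<m + n - k. [:coeff (row_poly i) d:] * ?c ^ d)"
    by (rule sum_col_degree)
  also have "\<dots> = pcompose (row_poly i) ?c"
    by (rule pcompose_eq_sum_coeff[symmetric]) (rule degree_row_poly[OF assms(1)])
  also have "ext_mat $$ (i, n - k - 1) * eval_mat $$ (n - k - 1, n - k + t) = - (row_last i * pcompose f ?c)"
    using assms lt by (simp add: ext_mat_def eval_mat_def)
  finally show ?thesis by simp
qed

lemma ext_mat_mult_eval_mat_upper_right:
  assumes "i < n - k" "n - k \<le> j" "j < m + n - k + 1"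
  shows "(ext_mat * eval_mat) $$ (i, j) = 0"
proof -
  define t where "t = j - (n - k)"
  have j: "j = n - k + t" "t < Suc m" using assms unfolding t_def by auto
  have "pcompose f (cs ! t) = 0 \<or> cs ! t = [:0, 1:]"
    using root_or_var j(2) length_cs by simp
  moreover have "(ext_mat * eval_mat) $$ (i, j)
      = cs ! t ^ row_shift i * pcompose f (cs ! t) - monom 1 (row_shift i) * pcompose f (cs ! t)"
    using ext_mat_mult_eval_mat_right[of i t] assms j k_less_m
    by (simp add: row_poly_def row_last_def pcompose_monom_mult)
  ultimately show ?thesis by (auto simp: monom_altdef)
qed

lemma ext_mat_mult_eval_mat_lower_right:
  assumes "i < Suc m" "j < Suc m"
  shows "(ext_mat * eval_mat) $$ (i + (n - k), j + (n - k)) = M_mat g k cs $$ (i, j)"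
proof (cases "i < m - k")
  case True
  then have "(ext_mat * eval_mat) $$ (i + (n - k), j + (n - k)) = pcompose (row_poly (i + (n - k))) (cs ! j)"
    using ext_mat_mult_eval_mat_right[of "i + (n - k)" j] assms k_less_n
    by (simp add: row_last_def add.commute)
  then show ?thesis
    using True assms
    by (simp add: M_mat_def Let_def length_cs row_poly_def row_shift_def pcompose_monom_mult mult.commute[of "g \<circ>\<^sub>p _"])
next
  case False
  then have "(ext_mat * eval_mat) $$ (i + (n - k), j + (n - k)) = eval_mat $$ (i + (n - k), j + (n - k))"
    using assms k_less_m k_less_n by (intro ext_mat_mult_eval_mat_bottom) auto
  then show ?thesis
    using False assms k_less_m k_less_n by (auto simp: M_mat_def length_cs eval_mat_def col_degree_def)
qed

lemma det_ext_mat_upper_left: "det (mat (n - k) (n - k) (\<lambda>(i, j). ext_mat $$ (i, j))) = 1"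
proof -
  let ?U = "mat (n - k) (n - k) (\<lambda>(i, j). ext_mat $$ (i, j))"
  have "upper_triangular ?U"
    unfolding upper_triangular_def
  proof (intro allI impI)
    fix i j assume "i < dim_row ?U" "j < i"
    then show "?U $$ (i, j) = 0"
      using degree_f k_less_m k_less_n
      by (auto simp: ext_mat_def row_poly_def row_shift_def col_degree_def coeff_monom_mult coeff_eq_0)
  qed
  moreover have "?U $$ (i, i) = 1" if "i < n - k" for i
    using that degree_f monic_f k_less_m k_less_n
    by (auto simp: ext_mat_def row_poly_def row_last_def row_shift_def col_degree_def coeff_monom_mult)
  ultimately show ?thesis
    using det_upper_triangular[of ?U "n - k"] by (simp add: prod_list_diag_prod)
qed

theorem F_k_mult_det_vandermonde:
  "F_k m n k f g * det (vandermonde cs) = (- 1) ^ (m - k) * det (M_mat g k cs)"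
proof -
  have P: "m + n - k + 1 = (n - k) + Suc m" using k_less_n by simp
  have ext: "ext_mat \<in> carrier_mat (m + n - k + 1) (m + n - k + 1)" by (simp add: ext_mat_def)
  have eval: "eval_mat \<in> carrier_mat (m + n - k + 1) (m + n - k + 1)" by (simp add: eval_mat_def)
  have "det (ext_mat * eval_mat)
      = det (mat (n - k) (n - k) (\<lambda>(i, j). (ext_mat * eval_mat) $$ (i, j)))
        * det (mat (Suc m) (Suc m) (\<lambda>(i, j). (ext_mat * eval_mat) $$ (i + (n - k), j + (n - k))))"
    by (rule det_upper_right_zero_blocks)
      (use ext eval P ext_mat_mult_eval_mat_upper_right in auto)
  also have "mat (n - k) (n - k) (\<lambda>(i, j). (ext_mat * eval_mat) $$ (i, j))
      = mat (n - k) (n - k) (\<lambda>(i, j). ext_mat $$ (i, j))"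
    by (rule eq_matI) (auto simp: ext_mat_mult_eval_mat_left)
  also have "mat (Suc m) (Suc m) (\<lambda>(i, j). (ext_mat * eval_mat) $$ (i + (n - k), j + (n - k)))
      = M_mat g k cs"
    by (rule eq_matI) (auto simp: ext_mat_mult_eval_mat_lower_right M_mat_def length_cs)
  finally have "det (ext_mat * eval_mat) = det (M_mat g k cs)" using det_ext_mat_upper_left by simp
  moreover have "det (ext_mat * eval_mat) = (- 1) ^ (m - k) * F_k m n k f g * det (vandermonde cs)"
    by (simp add: det_mult[OF ext eval] det_ext_mat det_eval_mat)
  ultimately show ?thesis
    by (metis (no_types) mult.assoc mult.left_neutral left_minus_one_mult_self)
qed

end

lemma F_k_prod_linear_mult_det_vandermonde:
  fixes as :: "'a::idom list"
  assumes "k < length as" and "k < n" and "degree g \<le> n"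
  shows "F_k (length as) n k (\<Prod>a\<leftarrow>as. [:- a, 1:]) g * det (vandermonde (map (\<lambda>a. [:a:]) as @ [[:0, 1:]]))
    = (- 1) ^ (length as - k) * det (M_mat g k (map (\<lambda>a. [:a:]) as @ [[:0, 1:]]))"
proof -
  interpret subres_evaluation "length as" n k "\<Prod>a\<leftarrow>as. [:- a, 1:]" g "map (\<lambda>a. [:a:]) as @ [[:0, 1:]]"
    by unfold_locales
      (use assms lead_coeff_prod_linear[of as] in
        \<open>auto simp: degree_prod_linear pcompose_pCons_0 poly_prod_linear_eq_0\<close>)
  show ?thesis by (rule F_k_mult_det_vandermonde)
qed

theorem corollary3p13:
  fixes as bs :: "'a::field list" and k m n :: nat and f g :: "'a poly"
  assumes "distinct as" and "distinct bs"
    and "m = length as" and "n = length bs"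
    and "f = (\<Prod>a\<leftarrow>as. [:- a, 1:])" and "g = (\<Prod>b\<leftarrow>bs. [:- b, 1:])"
    and "k < m" and "k < n"
  shows "(to_fract (F_k m n k f g) =
           (- 1) ^ (m - k) * to_fract (det (M_mat g k (map (\<lambda>a. [:a:]) as @ [[:0, 1:]])))
             / to_fract (det (vandermonde (map (\<lambda>a. [:a:]) as @ [[:0, 1:]]))))
         \<and> (to_fract (G_k m n k f g) =
           (- 1) ^ ((m - k - 1) * (n - k)) * to_fract (det (M_mat f k (map (\<lambda>b. [:b:]) bs @ [[:0, 1:]])))
             / to_fract (det (vandermonde (map (\<lambda>b. [:b:]) bs @ [[:0, 1:]]))))"
proof -
  let ?xs = "map (\<lambda>a. [:a:]) as @ [[:0, 1:]]" and ?ys = "map (\<lambda>b. [:b:]) bs @ [[:0, 1:]]"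
  have "distinct ?xs" "distinct ?ys" using assms(1,2) by (auto simp: distinct_map inj_on_def)
  then have nonzero: "det (vandermonde ?xs) \<noteq> 0" "det (vandermonde ?ys) \<noteq> 0"
    by (simp_all add: det_vandermonde_nonzero)
  have F: "F_k m n k f g * det (vandermonde ?xs) = (- 1) ^ (m - k) * det (M_mat g k ?xs)"
    using F_k_prod_linear_mult_det_vandermonde[of k as n g] assms degree_prod_linear[of bs] by simp
  have F': "F_k n m k g f * det (vandermonde ?ys) = (- 1) ^ (n - k) * det (M_mat f k ?ys)"
    using F_k_prod_linear_mult_det_vandermonde[of k bs m f] assms degree_prod_linear[of as] by simp
  have sign: "(- 1 :: 'a poly) ^ ((m - k) * (n - k)) * (- 1) ^ (n - k) = (- 1) ^ ((m - k - 1) * (n - k))"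
  proof -
    obtain a where a: "m - k = Suc a" "m - k - 1 = a" using assms(7) by (metis Suc_diff_Suc diff_Suc_1)
    have "Suc a * (n - k) + (n - k) = a * (n - k) + 2 * (n - k)" by simp
    then show ?thesis unfolding a power_add[symmetric] by (simp add: power_add power_mult)
  qed
  have "G_k m n k f g * det (vandermonde ?ys)
      = (- 1) ^ ((m - k) * (n - k)) * (F_k n m k g f * det (vandermonde ?ys))"
    by (simp add: G_k_eq_F_k_swap[OF assms(7,8)] mult.assoc)
  also have "\<dots> = (- 1) ^ ((m - k - 1) * (n - k)) * det (M_mat f k ?ys)"
    by (simp only: F' mult.assoc[symmetric] sign)
  finally have G: "G_k m n k f g * det (vandermonde ?ys) = (- 1) ^ ((m - k - 1) * (n - k)) * det (M_mat f k ?ys)" .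
  show ?thesis
    using to_fract_eq_signed_quotient[OF F nonzero(1)] to_fract_eq_signed_quotient[OF G nonzero(2)] by simp
qed

end
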